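(* Assume the setting below with $h$ taking values in $[0,1]$, $n\ge 2m$, $\delta\in(0,1)$, and $\eta$ symmetric. Then with probability at least $1-\delta$, \[ |U_{n}-\theta|\le\sqrt{\frac{2W_{n}}{\lfloor n/m\rfloor}\log\frac{3}{\delta}}+\left(\frac{\sqrt{2}}{2}+\frac{\sqrt{42}}{6}\right)\sqrt{\frac{2}{\lfloor n/m\rfloor\lfloor n/(2m)\rfloor}}\log\frac{3}{\delta}+\frac{4}{3\lfloor n/m\rfloor}\log\frac{3}{\delta}. \] In particular, if $n$ is divisible by $2m$, then with probability at least $1-\delta$, \[ |U_{n}-\theta|\le\sqrt{\frac{2mW_{n}}{n}\log\frac{3}{\delta}}+\frac{\left(4+\sqrt{2}\left[3+\sqrt{21}\right]\right)m}{3n}\log\frac{3}{\delta}. \]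
   Context: Let $\mathbb{X}\subseteq\mathbb{R}^d$ and let $\bm X_1,\dots,\bm X_n\in\mathbb{X}$ be IID with law $F$. Let $m\ge1$ and let $h:\mathbb{X}^m\to[0,1]$ be a measurable symmetric kernel of order $m$. Let $\theta=\mathbb{E}_F h(\bm X_1,\dots,\bm X_m)$ and $U_n=\binom{n}{m}^{-1}\sum_{1\le i_1<\dots<i_m\le n}h(\bm X_{i_1},\dots,\bm X_{i_m})$. Define $\eta(\bm x_1,\dots,\bm x_{2m})=\tfrac12[h(\bm x_1,\dots,\bm x_m)-h(\bm x_{m+1},\dots,\bm x_{2m})]^2$, call $\eta$ symmetric if it is invariant under every permutation of its $2m$ arguments, and let $W_n=\binom{n}{2m}^{-1}\sum_{1\le i_1<\dots<i_{2m}\le n}\eta(\bm X_{i_1},\dots,\bm X_{i_{2m}})$. $\lfloor\cdot\rfloor$ is the floor function. *)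

theory Defs
  imports "HOL-Probability.Probability"
begin

text \<open>Arguments of a kernel of order k are represented as extensional functions
  on the index set {..<k}.\<close>

definition ustat :: "nat \<Rightarrow> nat \<Rightarrow> ((nat \<Rightarrow> 'x) \<Rightarrow> real) \<Rightarrow> (nat \<Rightarrow> 'x) \<Rightarrow> real" where
  "ustat n k g x =
     (\<Sum>S | S \<subseteq> {..<n} \<and> card S = k. g (\<lambda>j\<in>{..<k}. x (sorted_list_of_set S ! j)))
       / real (n choose k)"

definition eta :: "nat \<Rightarrow> ((nat \<Rightarrow> 'x) \<Rightarrow> real) \<Rightarrow> (nat \<Rightarrow> 'x) \<Rightarrow> real" where
  "eta m h x = (1/2) * (h (\<lambda>j\<in>{..<m}. x j) - h (\<lambda>j\<in>{..<m}. x (m + j)))^2"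

definition symmetric_kernel :: "'x set \<Rightarrow> nat \<Rightarrow> ((nat \<Rightarrow> 'x) \<Rightarrow> real) \<Rightarrow> bool" where
  "symmetric_kernel A k g \<longleftrightarrow>
     (\<forall>x \<in> PiE {..<k} (\<lambda>_. A). \<forall>p. p permutes {..<k} \<longrightarrow> g (x \<circ> p) = g x)"

end

theory Submission
  imports Defs
begin

text \<open>Because the kernel is symmetric, a U-statistic of order \<open>k\<close> is the average, over all
  permutations of the sample, of the mean of the kernel over the \<open>\<lfloor>n/k\<rfloor>\<close> disjoint blocks
  of the permuted sample (Hoeffding's representation). Each block mean averages independent
  bounded variables, so Bernstein's bound on the moment generating function applies to it, and
  Jensen's inequality carries it through the average over permutations. This gives a Bernstein
  inequality for \<open>U\<^sub>n\<close> with the unknown variance \<open>V\<close> of \<open>h\<close>, and, applied to \<open>W\<^sub>n\<close>, whose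
  kernel \<open>\<eta>\<close> has mean \<open>V\<close> and variance at most \<open>V / 2\<close>, a lower confidence bound
  \<open>\<surd>V \<le> \<surd>W\<^sub>n + 5/3 \<surd>(L / \<lfloor>n/2m\<rfloor>)\<close>. A union bound over the three one-sided events of
  probability \<open>\<delta> / 3\<close> each gives the claim; the constant \<open>\<surd>2 / 2 + \<surd>42 / 6\<close> of the
  statement exceeds the \<open>5 / 3\<close> obtained here.\<close>

section \<open>Hoeffding's representation of U-statistics\<close>

lemma symmetric_kernel_reindex:
  assumes sym: "symmetric_kernel A k g"
    and f1: "bij_betw f1 {..<k} S" and f2: "bij_betw f2 {..<k} S"
    and x: "\<And>i. i \<in> S \<Longrightarrow> x i \<in> A"
  shows "g (\<lambda>j\<in>{..<k}. x (f1 j)) = g (\<lambda>j\<in>{..<k}. x (f2 j))"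
proof -
  define p where "p = (\<lambda>j. if j < k then inv_into {..<k} f2 (f1 j) else j)"
  have "bij_betw (inv_into {..<k} f2 \<circ> f1) {..<k} {..<k}"
    using f1 f2 bij_betw_inv_into bij_betw_trans by blast
  then have "bij_betw p {..<k} {..<k}"
    by (rule bij_betw_cong[THEN iffD1, rotated]) (auto simp: p_def)
  then have p: "p permutes {..<k}"
    by (rule bij_imp_permutes) (auto simp: p_def)
  have "f2 (p j) = f1 j" if "j < k" for j
  proof -
    have "f1 j \<in> f2 ` {..<k}" using f1 f2 that by (metis bij_betw_def imageI lessThan_iff)
    then show ?thesis using that by (simp add: p_def f_inv_into_f)
  qed
  moreover have "p j < k" if "j < k" for j
    using permutes_in_image[OF p] that by simp
  ultimately have eq: "(\<lambda>j\<in>{..<k}. x (f2 j)) \<circ> p = (\<lambda>j\<in>{..<k}. x (f1 j))"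
    by (auto simp: fun_eq_iff p_def)
  have "(\<lambda>j\<in>{..<k}. x (f2 j)) \<in> PiE {..<k} (\<lambda>_. A)"
    using f2 x by (auto simp: bij_betw_def)
  then show ?thesis using sym p eq unfolding symmetric_kernel_def by metis
qed

lemma ustat_affine:
  assumes "k \<le> n"
  shows "ustat n k (\<lambda>y. a * g y + b) x = a * ustat n k g x + b"
proof -
  have "card {S. S \<subseteq> {..<n} \<and> card S = k} = n choose k"
    using n_subsets[of "{..<n}" k] by simp
  moreover have "n choose k \<noteq> 0" using assms by simp
  ultimately show ?thesis
    unfolding ustat_def by (simp add: sum.distrib sum_distrib_left field_simps)
qed

lemma ustat_nonneg: "(\<And>y. 0 \<le> g y) \<Longrightarrow> 0 \<le> ustat n k g x"
  unfolding ustat_def by (simp add: sum_nonneg)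

lemma exists_permutes_image_eq:
  fixes n :: nat
  assumes B: "B \<subseteq> {..<n}" and S: "S \<subseteq> {..<n}" and c: "card B = card S"
  shows "\<exists>\<sigma>. \<sigma> permutes {..<n} \<and> \<sigma> ` B = S"
proof -
  have fB: "finite B" and fS: "finite S" using B S by (auto intro: finite_subset)
  obtain f where f: "bij_betw f B S" using finite_same_card_bij[OF fB fS c] by blast
  have "card ({..<n} - B) = card ({..<n} - S)"
    using B S c fB fS by (simp add: card_Diff_subset)
  then obtain f' where f': "bij_betw f' ({..<n} - B) ({..<n} - S)"
    using finite_same_card_bij by (metis finite_Diff finite_lessThan)
  define \<sigma> where "\<sigma> = (\<lambda>x. if x \<in> B then f x else if x < n then f' x else x)"
  have b1: "bij_betw \<sigma> B S"
    using f by (rule bij_betw_cong[THEN iffD1, rotated]) (auto simp: \<sigma>_def)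
  have b2: "bij_betw \<sigma> ({..<n} - B) ({..<n} - S)"
    using f' by (rule bij_betw_cong[THEN iffD1, rotated]) (auto simp: \<sigma>_def)
  have "bij_betw \<sigma> (B \<union> ({..<n} - B)) (S \<union> ({..<n} - S))"
    by (rule bij_betw_combine[OF b1 b2]) auto
  moreover have "B \<union> ({..<n} - B) = {..<n}" "S \<union> ({..<n} - S) = {..<n}" using B S by auto
  ultimately have "bij_betw \<sigma> {..<n} {..<n}" by simp
  then have "\<sigma> permutes {..<n}"
    by (rule bij_imp_permutes) (use B in \<open>auto simp: \<sigma>_def\<close>)
  moreover have "\<sigma> ` B = S" using b1 by (simp add: bij_betw_def)
  ultimately show ?thesis by blast
qed

lemma card_permutes_image_eq:
  fixes n :: nat
  assumes B: "B \<subseteq> {..<n}" and S: "S \<subseteq> {..<n}" and c: "card S = card B"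
  shows "card {\<pi>. \<pi> permutes {..<n} \<and> \<pi> ` B = S} = card {\<pi>. \<pi> permutes {..<n} \<and> \<pi> ` B = B}"
proof -
  obtain \<sigma> where \<sigma>: "\<sigma> permutes {..<n}" "\<sigma> ` B = S"
    using exists_permutes_image_eq[OF B S c[symmetric]] by blast
  have inv\<sigma>: "inv \<sigma> ` S = B"
    unfolding \<sigma>(2)[symmetric] by (rule image_inv_f_f[OF permutes_inj[OF \<sigma>(1)]])
  have "bij_betw ((\<circ>) \<sigma>) {\<pi>. \<pi> permutes {..<n} \<and> \<pi> ` B = B} {\<pi>. \<pi> permutes {..<n} \<and> \<pi> ` B = S}"
  proof (rule bij_betw_byWitness[where f'="(\<circ>) (inv \<sigma>)"])
    show "\<forall>\<pi>\<in>{\<pi>. \<pi> permutes {..<n} \<and> \<pi> ` B = B}. inv \<sigma> \<circ> (\<sigma> \<circ> \<pi>) = \<pi>"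
      using permutes_inv_o(2)[OF \<sigma>(1)] by (simp add: o_assoc)
    show "\<forall>\<pi>\<in>{\<pi>. \<pi> permutes {..<n} \<and> \<pi> ` B = S}. \<sigma> \<circ> (inv \<sigma> \<circ> \<pi>) = \<pi>"
      using permutes_inv_o(1)[OF \<sigma>(1)] by (simp add: o_assoc)
    show "(\<circ>) \<sigma> ` {\<pi>. \<pi> permutes {..<n} \<and> \<pi> ` B = B} \<subseteq> {\<pi>. \<pi> permutes {..<n} \<and> \<pi> ` B = S}"
    proof (rule image_subsetI, clarify)
      fix \<pi> assume "\<pi> permutes {..<n}" "\<pi> ` B = B"
      moreover have "(\<sigma> \<circ> \<pi>) ` B = \<sigma> ` (\<pi> ` B)" by (rule image_comp[symmetric])
      ultimately show "\<sigma> \<circ> \<pi> permutes {..<n} \<and> (\<sigma> \<circ> \<pi>) ` B = S"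
        using \<sigma> by (simp add: permutes_compose)
    qed
    show "(\<circ>) (inv \<sigma>) ` {\<pi>. \<pi> permutes {..<n} \<and> \<pi> ` B = S} \<subseteq> {\<pi>. \<pi> permutes {..<n} \<and> \<pi> ` B = B}"
    proof (rule image_subsetI)
      fix \<pi> assume "\<pi> \<in> {\<pi>. \<pi> permutes {..<n} \<and> \<pi> ` B = S}"
      moreover have "(inv \<sigma> \<circ> \<pi>) ` B = inv \<sigma> ` (\<pi> ` B)" by (rule image_comp[symmetric])
      ultimately show "inv \<sigma> \<circ> \<pi> \<in> {\<pi>. \<pi> permutes {..<n} \<and> \<pi> ` B = B}"
        using \<sigma>(1) inv\<sigma> by (simp add: permutes_compose permutes_inv)
    qed
  qed
  then show ?thesis by (simp add: bij_betw_same_card)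
qed

lemma average_permutes_image:
  fixes F :: "nat set \<Rightarrow> real"
  assumes B: "B \<subseteq> {..<n}"
  shows "(\<Sum>\<pi> | \<pi> permutes {..<n}. F (\<pi> ` B)) / real (card {\<pi>. \<pi> permutes {..<n}})
       = (\<Sum>S | S \<subseteq> {..<n} \<and> card S = card B. F S) / real (n choose card B)"
proof -
  define G where "G = {\<pi>. \<pi> permutes {..<n}}"
  define Sk where "Sk = {S. S \<subseteq> {..<n} \<and> card S = card B}"
  define c where "c = card {\<pi>. \<pi> permutes {..<n} \<and> \<pi> ` B = B}"
  have fG: "finite G" unfolding G_def by (rule finite_permutations) simp
  have fSk: "finite Sk" unfolding Sk_def by (rule finite_subset[of _ "Pow {..<n}"]) auto
  have img: "(\<lambda>\<pi>. \<pi> ` B) ` G \<subseteq> Sk"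
  proof
    fix S assume "S \<in> (\<lambda>\<pi>. \<pi> ` B) ` G"
    then obtain \<pi> where \<pi>: "\<pi> permutes {..<n}" "S = \<pi> ` B" by (auto simp: G_def)
    then have "S \<subseteq> {..<n}" using B permutes_image[OF \<pi>(1)] by blast
    moreover have "card S = card B"
      using card_image[OF inj_on_subset[OF permutes_inj[OF \<pi>(1)] subset_UNIV]] \<pi>(2) by simp
    ultimately show "S \<in> Sk" by (simp add: Sk_def)
  qed
  have sum_G: "(\<Sum>\<pi>\<in>G. F' (\<pi> ` B)) = real c * (\<Sum>S\<in>Sk. F' S)" for F' :: "nat set \<Rightarrow> real"
  proof -
    have "(\<Sum>\<pi>\<in>G. F' (\<pi> ` B)) = (\<Sum>S\<in>Sk. \<Sum>\<pi>\<in>{\<pi>. \<pi> \<in> G \<and> \<pi> ` B = S}. F' (\<pi> ` B))"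
      by (rule sum.group[OF fG fSk img, symmetric])
    also have "\<dots> = (\<Sum>S\<in>Sk. real c * F' S)"
    proof (rule sum.cong[OF refl])
      fix S assume S: "S \<in> Sk"
      have "card {\<pi>. \<pi> \<in> G \<and> \<pi> ` B = S} = c"
        unfolding c_def G_def using card_permutes_image_eq[OF B] S by (simp add: Sk_def)
      then show "(\<Sum>\<pi>\<in>{\<pi>. \<pi> \<in> G \<and> \<pi> ` B = S}. F' (\<pi> ` B)) = real c * F' S"
        by simp
    qed
    finally show ?thesis by (simp add: sum_distrib_left)
  qed
  have card_G: "real (card G) = real c * real (n choose card B)"
    using sum_G[of "\<lambda>_. 1"] n_subsets[of "{..<n}" "card B"] by (simp add: Sk_def)
  have "finite {\<pi>. \<pi> permutes {..<n} \<and> \<pi> ` B = B}"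
    using fG unfolding G_def by (rule finite_subset[rotated]) auto
  moreover have "id \<in> {\<pi>. \<pi> permutes {..<n} \<and> \<pi> ` B = B}" by simp
  ultimately have "c \<noteq> 0" unfolding c_def by (metis card_0_eq empty_iff)
  have "(\<Sum>\<pi>\<in>G. F (\<pi> ` B)) / real (card G) = (real c * sum F Sk) / (real c * real (n choose card B))"
    by (simp only: sum_G card_G)
  with \<open>c \<noteq> 0\<close> show ?thesis by (simp add: G_def Sk_def)
qed

lemma permutes_block:
  fixes \<pi> :: "nat \<Rightarrow> nat"
  assumes \<pi>: "\<pi> permutes {..<n}" and "i < K" and "K * k \<le> n"
  shows "(\<lambda>j. \<pi> (i * k + j)) ` {..<k} = \<pi> ` {i * k..<i * k + k}"
    and "(\<lambda>j. \<pi> (i * k + j)) ` {..<k} \<subseteq> {..<n}"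
    and "inj_on (\<lambda>j. \<pi> (i * k + j)) {..<k}"
proof -
  have "(\<lambda>j. i * k + j) ` {..<k} = {i * k..<i * k + k}"
    unfolding lessThan_atLeast0 image_add_atLeastLessThan by (simp add: add.commute)
  moreover have "\<pi> ` (\<lambda>j. i * k + j) ` {..<k} = (\<lambda>j. \<pi> (i * k + j)) ` {..<k}"
    by (rule image_image)
  ultimately show img: "(\<lambda>j. \<pi> (i * k + j)) ` {..<k} = \<pi> ` {i * k..<i * k + k}"
    by simp
  have "i * k + k \<le> K * k" using mult_le_mono1[of "Suc i" K k] assms(2) by simp
  then have "\<pi> ` {i * k..<i * k + k} \<subseteq> \<pi> ` {..<n}"
    using assms(3) by (intro image_mono) auto
  then show "(\<lambda>j. \<pi> (i * k + j)) ` {..<k} \<subseteq> {..<n}"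
    unfolding img permutes_image[OF \<pi>] .
  show "inj_on (\<lambda>j. \<pi> (i * k + j)) {..<k}"
    by (rule inj_onI) (auto dest: injD[OF permutes_inj[OF \<pi>]])
qed
lemma disjoint_family_permutes_blocks:
  fixes \<pi> :: "nat \<Rightarrow> nat"
  assumes "\<pi> permutes {..<n}"
  shows "disjoint_family_on (\<lambda>i. (\<lambda>j. \<pi> (i * k + j)) ` {..<k}) I"
proof -
  have "i * k + j \<noteq> i' * k + j'" if "i \<noteq> i'" "j < k" "j' < k" for i i' j j'
  proof
    assume "i * k + j = i' * k + j'"
    then have "(i * k + j) div k = (i' * k + j') div k" by simp
    with that show False by simp
  qed
  then show ?thesis
    by (auto simp: disjoint_family_on_def inj_eq[OF permutes_inj[OF assms]])
qed

lemma ustat_eq_average_over_permutes: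
  assumes sym: "symmetric_kernel A k g" and x: "\<And>i. i < n \<Longrightarrow> x i \<in> A"
    and K: "0 < K" "K * k \<le> n"
  shows "ustat n k g x = (\<Sum>\<pi> | \<pi> permutes {..<n}. \<Sum>i<K. g (\<lambda>j\<in>{..<k}. x (\<pi> (i * k + j))))
      / (real (card {\<pi>. \<pi> permutes {..<n}}) * real K)"
proof -
  define G where "G = {\<pi>. \<pi> permutes {..<n}}"
  define rep where "rep S = g (\<lambda>j\<in>{..<k}. x (sorted_list_of_set S ! j))" for S
  have "finite G" unfolding G_def by (rule finite_permutations) simp
  moreover have "id \<in> G" by (simp add: G_def)
  ultimately have G_pos: "card G > 0" by (auto simp: card_gt_0_iff)
  have block: "(\<Sum>\<pi>\<in>G. g (\<lambda>j\<in>{..<k}. x (\<pi> (i * k + j)))) = real (card G) * ustat n k g x"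
    if i: "i < K" for i
  proof -
    define B where "B = {i * k..<i * k + k}"
    have B: "B \<subseteq> {..<n}"
      using permutes_block(1,2)[OF permutes_id i K(2)] by (simp add: B_def)
    have eq: "g (\<lambda>j\<in>{..<k}. x (\<pi> (i * k + j))) = rep (\<pi> ` B)" if "\<pi> \<in> G" for \<pi>
    proof -
      have \<pi>: "\<pi> permutes {..<n}" using that by (simp add: G_def)
      note blk = permutes_block[OF \<pi> i K(2)]
      have b1: "bij_betw (\<lambda>j. \<pi> (i * k + j)) {..<k} (\<pi> ` B)"
        using blk(1,3) by (simp add: bij_betw_def B_def)
      then have "card (\<pi> ` B) = k" by (metis bij_betw_same_card card_lessThan)
      moreover have "finite (\<pi> ` B)" by (simp add: B_def)
      ultimately have b2: "bij_betw (\<lambda>j. sorted_list_of_set (\<pi> ` B) ! j) {..<k} (\<pi> ` B)"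
        by (intro bij_betw_nth) auto
      have "\<pi> ` B \<subseteq> {..<n}" using blk(1,2) by (simp add: B_def)
      then show ?thesis
        unfolding rep_def using symmetric_kernel_reindex[OF sym b1 b2] x by blast
    qed
    have "(\<Sum>\<pi>\<in>G. rep (\<pi> ` B)) / real (card G) = ustat n k g x"
      using average_permutes_image[OF B, of rep] unfolding G_def ustat_def rep_def B_def by simp
    then show ?thesis using G_pos eq by (simp add: field_simps)
  qed
  have "(\<Sum>\<pi>\<in>G. \<Sum>i<K. g (\<lambda>j\<in>{..<k}. x (\<pi> (i * k + j))))
      = (\<Sum>i<K. \<Sum>\<pi>\<in>G. g (\<lambda>j\<in>{..<k}. x (\<pi> (i * k + j))))"
    by (rule sum.swap)
  also have "\<dots> = real K * real (card G) * ustat n k g x"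
    by (simp add: block)
  finally show ?thesis
    unfolding G_def[symmetric] using G_pos K by (simp add: eq_divide_eq ac_simps)
qed

section \<open>Bernstein's inequality\<close>

lemma two_mult_power_three_le_fact: "2 * 3 ^ n \<le> (fact (n + 2) :: real)"
proof (induction n)
  case 0
  then show ?case by simp
next
  case (Suc n)
  have "(fact (Suc n + 2) :: real) = real (n + 3) * fact (n + 2)"
    by (simp add: numeral_3_eq_3 numeral_2_eq_2)
  also have "\<dots> \<ge> 3 * (2 * 3 ^ n)" using Suc by (intro mult_mono) auto
  finally show ?case by simp
qed

definition bernstein_psi :: "real \<Rightarrow> real" where
  "bernstein_psi l = l\<^sup>2 / (2 * (1 - l / 3))"

lemma bernstein_psi_nonneg: "l < 3 \<Longrightarrow> 0 \<le> bernstein_psi l"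
  by (simp add: bernstein_psi_def)

lemma exp_mult_le_bernstein:
  fixes l y :: real
  assumes l: "0 \<le> l" "l < 3" and y: "\<bar>y\<bar> \<le> 1"
  shows "exp (l * y) \<le> 1 + l * y + y\<^sup>2 * bernstein_psi l"
proof -
  define f where "f n = inverse (fact (n + 2)) * (l * y) ^ (n + 2)" for n
  define g where "g n = (y\<^sup>2 * l\<^sup>2 / 2) * (l / 3) ^ n" for n
  have e: "exp (l * y) = 1 + l * y + (\<Sum>n. f n)"
    unfolding f_def using exp_first_two_terms[of "l * y"] by simp
  have sf: "summable f"
  proof -
    have "summable (\<lambda>n. inverse (fact n) * (l * y) ^ n)"
      using summable_exp[of "l * y"] by (simp add: field_simps)
    then show ?thesis unfolding f_def by (rule summable_ignore_initial_segment)
  qed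
  have g_sums: "g sums ((y\<^sup>2 * l\<^sup>2 / 2) * (1 / (1 - l / 3)))"
    unfolding g_def by (rule sums_mult) (rule geometric_sums, use l in auto)
  have "f n \<le> g n" for n
  proof -
    have "f n = (l * y) ^ (n + 2) / fact (n + 2)" by (simp add: f_def divide_inverse mult.commute)
    also have "\<dots> \<le> \<bar>l * y\<bar> ^ (n + 2) / fact (n + 2)"
      by (intro divide_right_mono) (simp_all only: power_abs[symmetric] abs_ge_self fact_ge_zero)
    also have "\<bar>l * y\<bar> ^ (n + 2) = l ^ (n + 2) * (\<bar>y\<bar> ^ n * y\<^sup>2)"
      using l by (simp add: abs_mult power_mult_distrib power_add power2_eq_square)
    also have "\<dots> \<le> l ^ (n + 2) * y\<^sup>2"
      using y l by (intro mult_left_mono) (auto intro!: mult_left_le_one_le power_le_one)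
    also have "l ^ (n + 2) * y\<^sup>2 / fact (n + 2) \<le> l ^ (n + 2) * y\<^sup>2 / (2 * 3 ^ n)"
      using l two_mult_power_three_le_fact[of n] by (intro divide_left_mono) auto
    also have "\<dots> = g n"
      unfolding g_def by (simp add: power_add power_divide field_simps power2_eq_square)
    finally show ?thesis by (simp add: divide_right_mono)
  qed
  then have "(\<Sum>n. f n) \<le> (\<Sum>n. g n)" by (rule suminf_le[OF _ sf sums_summable[OF g_sums]])
  also have "\<dots> = y\<^sup>2 * bernstein_psi l"
    using sums_unique[OF g_sums] by (simp add: bernstein_psi_def)
  finally show ?thesis using e by simp
qed

lemma mult_bernstein_psi_at_optimum:
  fixes V t :: real
  assumes V: "0 < V" and t: "0 \<le> t"
  shows "V * bernstein_psi (t / (V + t / 3)) = t / (V + t / 3) * t / 2"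
proof -
  define l where "l = t / (V + t / 3)"
  have d: "0 < V + t / 3" using V t by simp
  have "1 - l / 3 = V / (V + t / 3)" using d by (simp add: l_def field_simps)
  then have "bernstein_psi l = l\<^sup>2 / (2 * (V / (V + t / 3)))"
    unfolding bernstein_psi_def by simp
  also have "\<dots> = l\<^sup>2 * (V + t / 3) / (2 * V)"
    using d V by (simp add: field_simps)
  also have "l\<^sup>2 * (V + t / 3) = l * t"
    using d by (simp add: l_def power2_eq_square)
  finally show ?thesis using V by (simp add: l_def)
qed

text \<open>The witness is the classical choice \<open>l = t / (V + t / 3)\<close>.\<close>

lemma exists_bernstein_exponent:
  fixes V L K :: real
  assumes V: "0 \<le> V" and L: "0 < L" and K: "0 < K"
  shows "\<exists>l. 0 \<le> l \<and> l < 3 \<and>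
     K * (V * bernstein_psi l - l * (sqrt (2 * V * L / K) + 2 * L / (3 * K))) \<le> - L"
proof -
  define s where "s = L / K"
  define r where "r = sqrt (2 * V * L / K)"
  define t where "t = r + 2 * s / 3"
  have s: "0 < s" using L K by (simp add: s_def)
  have r: "0 \<le> r" "r\<^sup>2 = 2 * V * s" using V L K by (simp_all add: r_def s_def)
  have t: "t = sqrt (2 * V * L / K) + 2 * L / (3 * K)" by (simp add: t_def r_def s_def)
  have t_pos: "0 < t" using s r by (simp add: t_def)
  show ?thesis
  proof (cases "V = 0")
    case True
    have "K * (V * bernstein_psi (3 / 2) - 3 / 2 * t) = - (3 / 2) * K * t"
      using True by simp
    also have "\<dots> \<le> - (3 / 2) * K * (2 * s / 3)" using r K by (simp add: t_def)
    also have "\<dots> = - L" using K by (simp add: s_def)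
    finally show ?thesis unfolding t by (intro exI[of _ "3 / 2"]) simp
  next
    case False
    then have V_pos: "0 < V" using V by simp
    define l where "l = t / (V + t / 3)"
    have d: "0 < V + t / 3" using V_pos t_pos by simp
    have l: "0 \<le> l" "l < 3" using V_pos t_pos d by (simp_all add: l_def field_simps)
    have "2 * s * (V + t / 3) = r\<^sup>2 + 2 * r * s / 3 + 4 * s\<^sup>2 / 9"
      using r by (simp add: t_def power2_eq_square field_simps)
    also have "\<dots> \<le> r\<^sup>2 + 4 * r * s / 3 + 4 * s\<^sup>2 / 9"
      using r(1) s by simp
    also have "\<dots> = t\<^sup>2"
      by (simp add: t_def power2_eq_square field_simps)
    finally have "s \<le> l * t / 2"
      using d by (simp add: l_def power2_eq_square field_simps)
    have "V * bernstein_psi l = l * t / 2"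
      unfolding l_def by (rule mult_bernstein_psi_at_optimum[OF V_pos less_imp_le[OF t_pos]])
    then have "K * (V * bernstein_psi l - l * t) = - (K * (l * t / 2))"
      by (simp add: algebra_simps)
    also have "\<dots> \<le> - (K * s)" using \<open>s \<le> l * t / 2\<close> K by simp
    also have "\<dots> = - L" using K by (simp add: s_def)
    finally show ?thesis unfolding t using l by blast
  qed
qed

lemma (in finite_measure) integrable_of_abs_le:
  fixes f :: "'a \<Rightarrow> real"
  assumes "f \<in> borel_measurable M" "\<And>\<omega>. \<omega> \<in> space M \<Longrightarrow> \<bar>f \<omega>\<bar> \<le> B"
  shows "integrable M f"
  using assms by (intro integrable_const_bound[where B = B]) auto

lemma (in prob_space) mgf_le_bernstein:
  fixes Z :: "'a \<Rightarrow> real"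
  assumes Z: "random_variable borel Z" "\<And>\<omega>. \<omega> \<in> space M \<Longrightarrow> \<bar>Z \<omega>\<bar> \<le> 1"
    and mean: "expectation Z = 0" and var: "expectation (\<lambda>\<omega>. (Z \<omega>)\<^sup>2) \<le> V"
    and l: "0 \<le> l" "l < 3"
  shows "expectation (\<lambda>\<omega>. exp (l * Z \<omega>)) \<le> exp (V * bernstein_psi l)"
proof -
  have int: "integrable M Z" "integrable M (\<lambda>\<omega>. (Z \<omega>)\<^sup>2)"
    using Z by (auto intro!: integrable_of_abs_le[where B = 1] simp: abs_square_le_1)
  have "\<bar>exp (l * Z \<omega>)\<bar> \<le> exp l" if "\<omega> \<in> space M" for \<omega>
    using Z(2)[OF that] l by (simp add: abs_le_iff mult_left_le)
  then have "integrable M (\<lambda>\<omega>. exp (l * Z \<omega>))"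
    using Z by (intro integrable_of_abs_le[where B = "exp l"]) auto
  then have "expectation (\<lambda>\<omega>. exp (l * Z \<omega>)) \<le> expectation (\<lambda>\<omega>. 1 + l * Z \<omega> + (Z \<omega>)\<^sup>2 * bernstein_psi l)"
    using Z int exp_mult_le_bernstein[OF l] by (intro integral_mono) auto
  also have "\<dots> = 1 + l * expectation Z + expectation (\<lambda>\<omega>. (Z \<omega>)\<^sup>2) * bernstein_psi l"
    using int by (simp add: prob_space)
  also have "\<dots> \<le> 1 + V * bernstein_psi l"
    using mean var bernstein_psi_nonneg[OF l(2)] by (simp add: mult_right_mono)
  also have "\<dots> \<le> exp (V * bernstein_psi l)"
    by (simp add: add.commute exp_ge_add_one_self)
  finally show ?thesis .
qed

lemma (in prob_space) mgf_sum_indep_le_bernstein: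
  fixes Y :: "nat \<Rightarrow> 'a \<Rightarrow> real"
  assumes indep: "indep_vars (\<lambda>_. borel) Y {..<K}"
    and bnd: "\<And>i \<omega>. i < K \<Longrightarrow> \<omega> \<in> space M \<Longrightarrow> \<bar>Y i \<omega>\<bar> \<le> 1"
    and mean: "\<And>i. i < K \<Longrightarrow> expectation (Y i) = 0"
    and var: "\<And>i. i < K \<Longrightarrow> expectation (\<lambda>\<omega>. (Y i \<omega>)\<^sup>2) \<le> V"
    and l: "0 \<le> l" "l < 3"
  shows "expectation (\<lambda>\<omega>. exp (l * (\<Sum>i<K. Y i \<omega>))) \<le> exp (V * bernstein_psi l) ^ K"
proof -
  have Y: "random_variable borel (Y i)" if "i < K" for i
    using indep that by (simp add: indep_vars_def)
  have "\<bar>exp (l * Y i \<omega>)\<bar> \<le> exp l" if "i < K" "\<omega> \<in> space M" for i \<omega>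
    using bnd[OF that] l by (simp add: abs_le_iff mult_left_le)
  then have int: "integrable M (\<lambda>\<omega>. exp (l * Y i \<omega>))" if "i < K" for i
    using Y that by (intro integrable_of_abs_le[where B = "exp l"]) auto
  have "expectation (\<lambda>\<omega>. exp (l * (\<Sum>i<K. Y i \<omega>))) = expectation (\<lambda>\<omega>. \<Prod>i<K. exp (l * Y i \<omega>))"
    by (simp add: sum_distrib_left exp_sum)
  also have "\<dots> = (\<Prod>i<K. expectation (\<lambda>\<omega>. exp (l * Y i \<omega>)))"
    using int by (intro indep_vars_lebesgue_integral indep_vars_compose2[OF indep]) auto
  also have "\<dots> \<le> (\<Prod>i<K. exp (V * bernstein_psi l))"
    using Y bnd mean var by (intro prod_mono conjI integral_nonneg_AE mgf_le_bernstein[OF _ _ _ _ l]) auto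
  finally show ?thesis by simp
qed

lemma exp_average_le_average_exp:
  fixes f :: "'p \<Rightarrow> real"
  assumes "finite G" "G \<noteq> {}"
  shows "exp ((\<Sum>x\<in>G. f x) / card G) \<le> (\<Sum>x\<in>G. exp (f x)) / card G"
proof -
  have "card G > 0" using assms by (simp add: card_gt_0_iff)
  then have "exp (\<Sum>x\<in>G. (1 / card G) *\<^sub>R f x) \<le> (\<Sum>x\<in>G. (1 / card G) * exp (f x))"
    using convex_on_sum[OF assms convex_on_exp[of 1], of "\<lambda>_. 1 / card G" f] by simp
  then show ?thesis by (simp add: sum_divide_distrib)
qed

lemma (in prob_space) Chernoff_inequality:
  fixes T :: "'a \<Rightarrow> real"
  assumes [measurable]: "random_variable borel T"
    and int: "integrable M (\<lambda>\<omega>. exp (l * T \<omega>))" and l: "0 \<le> l"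
  shows "prob {\<omega> \<in> space M. t \<le> T \<omega>} \<le> expectation (\<lambda>\<omega>. exp (l * T \<omega>)) / exp (l * t)"
proof -
  have "prob {\<omega> \<in> space M. t \<le> T \<omega>} \<le> prob {\<omega> \<in> space M. exp (l * t) \<le> exp (l * T \<omega>)}"
    using l by (intro finite_measure_mono) (auto intro: mult_left_mono)
  also have "\<dots> \<le> expectation (\<lambda>\<omega>. exp (l * T \<omega>)) / exp (l * t)"
    by (rule integral_Markov_inequality_measure[OF int, where A = "space M"]) auto
  finally show ?thesis .
qed

text \<open>The inner sums need not be independent of each other: Jensen's inequality moves the
  exponential inside the outer average, so only independence within each inner sum is used.\<close>

lemma (in prob_space) mgf_average_le_bernstein:
  fixes Y :: "'p \<Rightarrow> nat \<Rightarrow> 'a \<Rightarrow> real" and G :: "'p set"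
  assumes G: "finite G" "G \<noteq> {}"
    and indep: "\<And>\<pi>. \<pi> \<in> G \<Longrightarrow> indep_vars (\<lambda>_. borel) (Y \<pi>) {..<K}"
    and bnd: "\<And>\<pi> i \<omega>. \<pi> \<in> G \<Longrightarrow> i < K \<Longrightarrow> \<omega> \<in> space M \<Longrightarrow> \<bar>Y \<pi> i \<omega>\<bar> \<le> 1"
    and mean: "\<And>\<pi> i. \<pi> \<in> G \<Longrightarrow> i < K \<Longrightarrow> expectation (Y \<pi> i) = 0"
    and var: "\<And>\<pi> i. \<pi> \<in> G \<Longrightarrow> i < K \<Longrightarrow> expectation (\<lambda>\<omega>. (Y \<pi> i \<omega>)\<^sup>2) \<le> V"
    and l: "0 \<le> l" "l < 3"
  shows "integrable M (\<lambda>\<omega>. exp (l * ((\<Sum>\<pi>\<in>G. \<Sum>i<K. Y \<pi> i \<omega>) / card G)))"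
    and "expectation (\<lambda>\<omega>. exp (l * ((\<Sum>\<pi>\<in>G. \<Sum>i<K. Y \<pi> i \<omega>) / card G)))
           \<le> exp (real K * (V * bernstein_psi l))"
proof -
  define S where "S \<pi> \<omega> = (\<Sum>i<K. Y \<pi> i \<omega>)" for \<pi> \<omega>
  have card_G: "card G > 0" using G by (simp add: card_gt_0_iff)
  have "Y \<pi> i \<in> borel_measurable M" if "\<pi> \<in> G" "i < K" for \<pi> i
    using indep[OF that(1)] that(2) by (simp add: indep_vars_def)
  then have S_meas: "S \<pi> \<in> borel_measurable M" if "\<pi> \<in> G" for \<pi>
    unfolding S_def using that by (auto intro!: borel_measurable_sum)
  have S_le: "S \<pi> \<omega> \<le> K" if "\<pi> \<in> G" "\<omega> \<in> space M" for \<pi> \<omega>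
    using sum_mono[of "{..<K}" "\<lambda>i. Y \<pi> i \<omega>" "\<lambda>_. 1"] bnd[OF that(1) _ that(2)]
    by (simp add: S_def abs_le_iff)
  have int_S: "integrable M (\<lambda>\<omega>. exp (l * S \<pi> \<omega>))" if "\<pi> \<in> G" for \<pi>
    using S_meas[OF that] S_le[OF that] l
    by (intro integrable_of_abs_le[where B = "exp (l * K)"]) (auto intro: mult_left_mono)
  have "l * ((\<Sum>\<pi>\<in>G. S \<pi> \<omega>) / card G) \<le> l * K" if "\<omega> \<in> space M" for \<omega>
    using sum_mono[of G "\<lambda>\<pi>. S \<pi> \<omega>" "\<lambda>_. real K"] S_le[OF _ that] card_G l
    by (intro mult_left_mono) (simp_all add: field_simps)
  then show int: "integrable M (\<lambda>\<omega>. exp (l * ((\<Sum>\<pi>\<in>G. \<Sum>i<K. Y \<pi> i \<omega>) / card G)))"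
    using S_meas unfolding S_def[symmetric]
    by (intro integrable_of_abs_le[where B = "exp (l * K)"] borel_measurable_sum) auto
  have "exp (l * ((\<Sum>\<pi>\<in>G. S \<pi> \<omega>) / card G)) \<le> (\<Sum>\<pi>\<in>G. exp (l * S \<pi> \<omega>)) / card G" for \<omega>
    using exp_average_le_average_exp[OF G, of "\<lambda>\<pi>. l * S \<pi> \<omega>"] by (simp add: sum_distrib_left)
  then have "expectation (\<lambda>\<omega>. exp (l * ((\<Sum>\<pi>\<in>G. S \<pi> \<omega>) / card G)))
      \<le> expectation (\<lambda>\<omega>. (\<Sum>\<pi>\<in>G. exp (l * S \<pi> \<omega>)) / card G)"
    using int int_S unfolding S_def[symmetric] by (intro integral_mono) auto
  also have "\<dots> = (\<Sum>\<pi>\<in>G. expectation (\<lambda>\<omega>. exp (l * S \<pi> \<omega>))) / card G"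
    using int_S by simp
  also have "\<dots> \<le> (\<Sum>\<pi>\<in>G. exp (V * bernstein_psi l) ^ K) / card G"
    unfolding S_def using indep bnd mean var
    by (intro divide_right_mono sum_mono mgf_sum_indep_le_bernstein[OF _ _ _ _ l]) auto
  also have "\<dots> = exp (real K * (V * bernstein_psi l))"
    using card_G by (simp add: exp_of_nat_mult)
  finally show "expectation (\<lambda>\<omega>. exp (l * ((\<Sum>\<pi>\<in>G. \<Sum>i<K. Y \<pi> i \<omega>) / card G)))
      \<le> exp (real K * (V * bernstein_psi l))"
    unfolding S_def .
qed

lemma (in prob_space) prob_average_ge_bernstein:
  fixes Y :: "'p \<Rightarrow> nat \<Rightarrow> 'a \<Rightarrow> real" and G :: "'p set"
  assumes G: "finite G" "G \<noteq> {}" and K: "0 < K"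
    and indep: "\<And>\<pi>. \<pi> \<in> G \<Longrightarrow> indep_vars (\<lambda>_. borel) (Y \<pi>) {..<K}"
    and bnd: "\<And>\<pi> i \<omega>. \<pi> \<in> G \<Longrightarrow> i < K \<Longrightarrow> \<omega> \<in> space M \<Longrightarrow> \<bar>Y \<pi> i \<omega>\<bar> \<le> 1"
    and mean: "\<And>\<pi> i. \<pi> \<in> G \<Longrightarrow> i < K \<Longrightarrow> expectation (Y \<pi> i) = 0"
    and var: "\<And>\<pi> i. \<pi> \<in> G \<Longrightarrow> i < K \<Longrightarrow> expectation (\<lambda>\<omega>. (Y \<pi> i \<omega>)\<^sup>2) \<le> V"
    and L: "0 < L"
  shows "prob {\<omega> \<in> space M. sqrt (2 * V * L / K) + 2 * L / (3 * K)
            \<le> (\<Sum>\<pi>\<in>G. \<Sum>i<K. Y \<pi> i \<omega>) / (real (card G) * real K)} \<le> exp (- L)"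
proof -
  define t where "t = sqrt (2 * V * L / K) + 2 * L / (3 * K)"
  define A where "A \<omega> = (\<Sum>\<pi>\<in>G. \<Sum>i<K. Y \<pi> i \<omega>) / card G" for \<omega>
  obtain \<pi>\<^sub>0 where "\<pi>\<^sub>0 \<in> G" using G by blast
  moreover have "0 \<le> expectation (\<lambda>\<omega>. (Y \<pi>\<^sub>0 0 \<omega>)\<^sup>2)" by simp
  ultimately have V: "0 \<le> V" using var[of \<pi>\<^sub>0 0] K by linarith
  obtain l where l: "0 \<le> l" "l < 3" and lK: "real K * (V * bernstein_psi l - l * t) \<le> - L"
    using exists_bernstein_exponent[OF V L, of "real K"] K unfolding t_def by auto
  have int: "integrable M (\<lambda>\<omega>. exp (l * A \<omega>))"
    using G indep bnd mean var l unfolding A_def by (rule mgf_average_le_bernstein(1))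
  have mgf: "expectation (\<lambda>\<omega>. exp (l * A \<omega>)) \<le> exp (real K * (V * bernstein_psi l))"
    using G indep bnd mean var l unfolding A_def by (rule mgf_average_le_bernstein(2))
  have "Y \<pi> i \<in> borel_measurable M" if "\<pi> \<in> G" "i < K" for \<pi> i
    using indep[OF that(1)] that(2) by (simp add: indep_vars_def)
  then have "random_variable borel A"
    unfolding A_def by (auto intro!: borel_measurable_sum borel_measurable_divide)
  then have "prob {\<omega> \<in> space M. K * t \<le> A \<omega>} \<le> expectation (\<lambda>\<omega>. exp (l * A \<omega>)) / exp (l * (K * t))"
    using int l(1) by (rule Chernoff_inequality)
  also have "\<dots> \<le> exp (real K * (V * bernstein_psi l)) / exp (l * (K * t))"
    using mgf by (simp add: divide_right_mono)
  also have "\<dots> = exp (real K * (V * bernstein_psi l - l * t))"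
    by (simp add: exp_diff[symmetric] algebra_simps)
  also have "\<dots> \<le> exp (- L)" using lK by simp
  finally have "prob {\<omega> \<in> space M. K * t \<le> A \<omega>} \<le> exp (- L)" .
  moreover have "(\<Sum>\<pi>\<in>G. \<Sum>i<K. Y \<pi> i \<omega>) / (real (card G) * real K) = A \<omega> / K" for \<omega>
    by (simp add: A_def divide_divide_eq_left)
  ultimately show ?thesis
    using K by (simp add: t_def pos_le_divide_eq mult.commute)
qed

lemma (in prob_space) variance_le_bound_mult_expectation:
  fixes Z :: "'a \<Rightarrow> real"
  assumes Z: "random_variable borel Z" "\<And>\<omega>. \<omega> \<in> space M \<Longrightarrow> 0 \<le> Z \<omega> \<and> Z \<omega> \<le> b"
  shows "variance Z \<le> b * expectation Z"
proof -
  have "\<bar>Z \<omega>\<bar> \<le> b" "\<bar>(Z \<omega>)\<^sup>2\<bar> \<le> b\<^sup>2" "(Z \<omega>)\<^sup>2 \<le> b * Z \<omega>" if "\<omega> \<in> space M" for \<omega>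
    using Z(2)[OF that] by (auto simp: power2_eq_square intro: mult_mono mult_right_mono)
  moreover have int: "integrable M Z" "integrable M (\<lambda>\<omega>. (Z \<omega>)\<^sup>2)"
    using calculation(1,2) Z(1) by (auto intro!: integrable_of_abs_le)
  ultimately have "expectation (\<lambda>\<omega>. (Z \<omega>)\<^sup>2) \<le> expectation (\<lambda>\<omega>. b * Z \<omega>)"
    by (intro integral_mono) auto
  moreover have "variance Z \<le> expectation (\<lambda>\<omega>. (Z \<omega>)\<^sup>2)"
    unfolding variance_eq[OF int] by simp
  ultimately show ?thesis by simp
qed

lemma (in prob_space) expectation_half_square_diff_indep:
  fixes A B :: "'a \<Rightarrow> real"
  assumes indep: "indep_var borel A borel B"
    and bnd: "\<And>\<omega>. \<omega> \<in> space M \<Longrightarrow> \<bar>A \<omega>\<bar> \<le> c \<and> \<bar>B \<omega>\<bar> \<le> c"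
    and mean: "expectation A = expectation B" and var: "variance A = variance B"
  shows "expectation (\<lambda>\<omega>. (A \<omega> - B \<omega>)\<^sup>2 / 2) = variance A"
proof -
  have rv: "random_variable borel A" "random_variable borel B"
    using indep by (rule indep_var_rv1, rule indep_var_rv2)
  have "\<bar>(A \<omega>)\<^sup>2\<bar> \<le> c\<^sup>2" "\<bar>(B \<omega>)\<^sup>2\<bar> \<le> c\<^sup>2" if "\<omega> \<in> space M" for \<omega>
    using bnd[OF that] power_mono[of "\<bar>A \<omega>\<bar>" c 2] power_mono[of "\<bar>B \<omega>\<bar>" c 2] by simp_all
  then have int: "integrable M A" "integrable M B"
      "integrable M (\<lambda>\<omega>. (A \<omega>)\<^sup>2)" "integrable M (\<lambda>\<omega>. (B \<omega>)\<^sup>2)"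
    using rv bnd by (auto intro!: integrable_of_abs_le)
  have "(A \<omega> - B \<omega>)\<^sup>2 / 2 = (A \<omega>)\<^sup>2 / 2 + (B \<omega>)\<^sup>2 / 2 - A \<omega> * B \<omega>" for \<omega>
    by (simp add: power2_diff)
  moreover have "expectation (\<lambda>\<omega>. A \<omega> * B \<omega>) = expectation A * expectation B"
    using indep int(1,2) by (rule indep_var_lebesgue_integral)
  ultimately have "expectation (\<lambda>\<omega>. (A \<omega> - B \<omega>)\<^sup>2 / 2)
      = expectation (\<lambda>\<omega>. (A \<omega>)\<^sup>2) / 2 + expectation (\<lambda>\<omega>. (B \<omega>)\<^sup>2) / 2 - expectation A * expectation B"
    using int indep_var_integrable[OF indep int(1,2)] by simp
  then show ?thesis
    using var mean unfolding variance_eq[OF int(1,3)] variance_eq[OF int(2,4)]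
    by (simp add: power2_eq_square)
qed

section \<open>U-statistics of independent identically distributed samples\<close>

locale iid_sample = prob_space M
  for M :: "'a measure" and X :: "nat \<Rightarrow> 'a \<Rightarrow> 'b::topological_space" and n :: nat
    and A :: "'b set" +
  assumes random_variable_X: "\<And>i. i < n \<Longrightarrow> X i \<in> borel_measurable M"
    and indep_X: "indep_vars (\<lambda>_. borel) X {..<n}"
    and identical_X: "\<And>i. i < n \<Longrightarrow> distr M borel (X i) = distr M borel (X 0)"
    and X_in: "\<And>i \<omega>. i < n \<Longrightarrow> \<omega> \<in> space M \<Longrightarrow> X i \<omega> \<in> A"
begin

definition sample_law :: "'b measure" where
  "sample_law = distr M borel (X 0)"

definition sample_tuple :: "nat \<Rightarrow> (nat \<Rightarrow> nat) \<Rightarrow> 'a \<Rightarrow> nat \<Rightarrow> 'b" where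
  "sample_tuple k f \<omega> = (\<lambda>j\<in>{..<k}. X (f j) \<omega>)"

lemma measurable_sample_tuple:
  assumes "f ` {..<k} \<subseteq> {..<n}"
  shows "sample_tuple k f \<in> measurable M (PiM {..<k} (\<lambda>_. borel))"
  unfolding sample_tuple_def using assms by (intro measurable_restrict random_variable_X) auto

lemma sample_tuple_in_PiE:
  assumes "f ` {..<k} \<subseteq> {..<n}" "\<omega> \<in> space M"
  shows "sample_tuple k f \<omega> \<in> PiE {..<k} (\<lambda>_. A)"
  using assms X_in by (auto simp: sample_tuple_def)

lemma indep_sample_tuples:
  assumes sub: "\<And>i. i \<in> I \<Longrightarrow> f i ` {..<k} \<subseteq> {..<n}"
    and disj: "disjoint_family_on (\<lambda>i. f i ` {..<k}) I"
  shows "indep_vars (\<lambda>_. PiM {..<k} (\<lambda>_. borel)) (\<lambda>i. sample_tuple k (f i)) I"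
proof -
  have restr: "indep_vars (\<lambda>i. PiM (f i ` {..<k}) (\<lambda>_. borel))
      (\<lambda>i \<omega>. restrict (\<lambda>l. X l \<omega>) (f i ` {..<k})) I"
    using sub disj by (intro indep_vars_restrict[OF indep_X]) auto
  have "indep_vars (\<lambda>_. PiM {..<k} (\<lambda>_. borel))
      (\<lambda>i \<omega>. (\<lambda>y. \<lambda>j\<in>{..<k}. y (f i j)) (restrict (\<lambda>l. X l \<omega>) (f i ` {..<k}))) I"
  proof (rule indep_vars_compose2[OF restr])
    show "(\<lambda>y. \<lambda>j\<in>{..<k}. y (f i j)) \<in> PiM (f i ` {..<k}) (\<lambda>_. borel) \<rightarrow>\<^sub>M PiM {..<k} (\<lambda>_. borel)"
      for i
      by (rule measurable_restrict) (auto intro!: measurable_component_singleton)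
  qed
  then show ?thesis
    by (rule indep_vars_cong[THEN iffD1, OF refl _ refl, rotated]) (auto simp: sample_tuple_def fun_eq_iff)
qed

lemma distr_sample_tuple:
  assumes f: "inj_on f {..<k}" "f ` {..<k} \<subseteq> {..<n}" and k: "0 < k"
  shows "distr M (PiM {..<k} (\<lambda>_. borel)) (sample_tuple k f) = PiM {..<k} (\<lambda>_. sample_law)"
proof -
  have "indep_vars (\<lambda>_. PiM {..<1} (\<lambda>_. borel)) (\<lambda>i. sample_tuple 1 (\<lambda>_. f i)) {..<k}"
    using f by (intro indep_sample_tuples) (auto simp: disjoint_family_on_def inj_on_eq_iff)
  then have "indep_vars (\<lambda>_. borel) (\<lambda>i \<omega>. sample_tuple 1 (\<lambda>_. f i) \<omega> 0) {..<k}"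
    by (rule indep_vars_compose2[where Y = "\<lambda>_ y. y 0"]) (auto intro: measurable_component_singleton)
  then have "indep_vars (\<lambda>_. borel) (\<lambda>i. X (f i)) {..<k}"
    by (simp add: sample_tuple_def)
  then have "distr M (PiM {..<k} (\<lambda>_. borel)) (\<lambda>\<omega>. \<lambda>j\<in>{..<k}. X (f j) \<omega>)
      = PiM {..<k} (\<lambda>j. distr M borel (X (f j)))"
    using indep_vars_iff_distr_eq_PiM'[where I = "{..<k}" and M' = "\<lambda>_. borel" and X = "\<lambda>j. X (f j)"]
      k f random_variable_X
    by auto
  also have "\<dots> = PiM {..<k} (\<lambda>_. sample_law)"
    using f identical_X by (intro PiM_cong) (auto simp: sample_law_def)
  finally show ?thesis by (simp add: sample_tuple_def[abs_def])
qed

lemma integral_sample_tuple: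
  fixes g :: "(nat \<Rightarrow> 'b) \<Rightarrow> real"
  assumes "inj_on f {..<k}" "f ` {..<k} \<subseteq> {..<n}" "0 < k"
    and "g \<in> borel_measurable (PiM {..<k} (\<lambda>_. borel))"
  shows "expectation (\<lambda>\<omega>. g (sample_tuple k f \<omega>)) = (\<integral>x. g x \<partial>PiM {..<k} (\<lambda>_. sample_law))"
  using integral_distr[OF measurable_sample_tuple[OF assms(2)] assms(4)] distr_sample_tuple[OF assms(1-3)]
  by simp

lemma borel_measurable_ustat:
  assumes g: "g \<in> borel_measurable (PiM {..<k} (\<lambda>_. borel))"
  shows "(\<lambda>\<omega>. ustat n k g (\<lambda>i. X i \<omega>)) \<in> borel_measurable M"
proof -
  have "(\<lambda>\<omega>. g (sample_tuple k ((!) (sorted_list_of_set S)) \<omega>)) \<in> borel_measurable M"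
    if S: "S \<subseteq> {..<n}" "card S = k" for S
  proof -
    have "finite S" using S(1) finite_subset by blast
    then have "sorted_list_of_set S ! j \<in> S" if "j < k" for j
      using S(2) that by (metis nth_mem length_sorted_list_of_set set_sorted_list_of_set)
    then have "(!) (sorted_list_of_set S) ` {..<k} \<subseteq> {..<n}"
      using S(1) by auto
    from measurable_comp[OF measurable_sample_tuple[OF this] g] show ?thesis
      by (simp add: o_def)
  qed
  then show ?thesis
    unfolding ustat_def sample_tuple_def by (auto intro!: borel_measurable_sum borel_measurable_divide)
qed

theorem prob_ustat_ge_bernstein:
  fixes g :: "(nat \<Rightarrow> 'b) \<Rightarrow> real"
  assumes sym: "symmetric_kernel A k g"
    and g_meas: "g \<in> borel_measurable (PiM {..<k} (\<lambda>_. borel))"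
    and k: "0 < k" "k \<le> n"
    and bnd: "\<And>x. x \<in> PiE {..<k} (\<lambda>_. A) \<Longrightarrow> \<bar>g x\<bar> \<le> 1"
    and mean: "(\<integral>x. g x \<partial>PiM {..<k} (\<lambda>_. sample_law)) = 0"
    and var: "(\<integral>x. (g x)\<^sup>2 \<partial>PiM {..<k} (\<lambda>_. sample_law)) \<le> V"
    and L: "0 < L"
  shows "prob {\<omega> \<in> space M. sqrt (2 * V * L / real (n div k)) + 2 * L / (3 * real (n div k))
           \<le> ustat n k g (\<lambda>i. X i \<omega>)} \<le> exp (- L)"
proof -
  define K where "K = n div k"
  define G where "G = {\<pi>. \<pi> permutes {..<n}}"
  define Y where "Y \<pi> i = (\<lambda>\<omega>. g (sample_tuple k (\<lambda>j. \<pi> (i * k + j)) \<omega>))" for \<pi> i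
  have K: "0 < K" "K * k \<le> n"
    using k by (auto simp: K_def div_greater_zero_iff div_times_less_eq_dividend)
  have "{\<omega> \<in> space M. sqrt (2 * V * L / K) + 2 * L / (3 * K) \<le> ustat n k g (\<lambda>i. X i \<omega>)}
      = {\<omega> \<in> space M. sqrt (2 * V * L / K) + 2 * L / (3 * K)
           \<le> (\<Sum>\<pi>\<in>G. \<Sum>i<K. Y \<pi> i \<omega>) / (real (card G) * real K)}"
    using ustat_eq_average_over_permutes[OF sym _ K] X_in
    by (auto simp: G_def Y_def sample_tuple_def)
  also have "prob \<dots> \<le> exp (- L)"
  proof (rule prob_average_ge_bernstein[OF _ _ K(1) _ _ _ _ L])
    show "finite G" "G \<noteq> {}"
      by (auto simp: G_def finite_permutations intro: exI[of _ id])
    fix \<pi> assume "\<pi> \<in> G"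
    then have \<pi>: "\<pi> permutes {..<n}" by (simp add: G_def)
    note blk = permutes_block[OF \<pi> _ K(2)]
    have "indep_vars (\<lambda>_. PiM {..<k} (\<lambda>_. borel)) (\<lambda>i. sample_tuple k (\<lambda>j. \<pi> (i * k + j))) {..<K}"
      using blk(2) by (intro indep_sample_tuples disjoint_family_permutes_blocks[OF \<pi>]) auto
    then show "indep_vars (\<lambda>_. borel) (Y \<pi>) {..<K}"
      unfolding Y_def by (rule indep_vars_compose2) (rule g_meas)
    fix i assume i: "i < K"
    have g_sq: "(\<lambda>x. (g x)\<^sup>2) \<in> borel_measurable (PiM {..<k} (\<lambda>_. borel))"
      using g_meas by measurable
    show "\<bar>Y \<pi> i \<omega>\<bar> \<le> 1" if "\<omega> \<in> space M" for \<omega>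
      unfolding Y_def using bnd sample_tuple_in_PiE[OF blk(2)[OF i] that] .
    show "expectation (Y \<pi> i) = 0"
      using integral_sample_tuple[OF blk(3,2)[OF i] k(1) g_meas] mean by (simp add: Y_def)
    show "expectation (\<lambda>\<omega>. (Y \<pi> i \<omega>)\<^sup>2) \<le> V"
      using integral_sample_tuple[OF blk(3,2)[OF i] k(1) g_sq] var by (simp add: Y_def)
  qed
  finally show ?thesis by (simp add: K_def)
qed

end

lemma borel_measurable_eta:
  fixes h :: "(nat \<Rightarrow> 'b::topological_space) \<Rightarrow> real"
  assumes h: "h \<in> borel_measurable (PiM {..<m} (\<lambda>_. borel))"
  shows "eta m h \<in> borel_measurable (PiM {..<2 * m} (\<lambda>_. borel))"
proof -
  have shift: "(\<lambda>x. \<lambda>j\<in>{..<m}. x (s + j)) \<in> PiM {..<2 * m} (\<lambda>_. borel) \<rightarrow>\<^sub>M PiM {..<m} (\<lambda>_. (borel :: 'b measure))"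
    if "s \<le> m" for s
    using that by (intro measurable_restrict) (auto intro!: measurable_component_singleton)
  have [measurable]: "(\<lambda>x. h (\<lambda>j\<in>{..<m}. x j)) \<in> borel_measurable (PiM {..<2 * m} (\<lambda>_. borel))"
    using measurable_comp[OF shift[of 0] h] by (simp add: o_def)
  have [measurable]: "(\<lambda>x. h (\<lambda>j\<in>{..<m}. x (m + j))) \<in> borel_measurable (PiM {..<2 * m} (\<lambda>_. borel))"
    using measurable_comp[OF shift[of m] h] by (simp add: o_def)
  show ?thesis unfolding eta_def by measurable
qed

lemma eta_bounds:
  assumes h: "\<And>x. x \<in> PiE {..<m} (\<lambda>_. A) \<Longrightarrow> h x \<in> {0..1}"
    and x: "x \<in> PiE {..<2 * m} (\<lambda>_. A)"
  shows "0 \<le> eta m h x \<and> eta m h x \<le> 1 / 2"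
proof -
  have "(\<lambda>j\<in>{..<m}. x j) \<in> PiE {..<m} (\<lambda>_. A)" and "(\<lambda>j\<in>{..<m}. x (m + j)) \<in> PiE {..<m} (\<lambda>_. A)"
    using x by (auto simp: PiE_iff)
  from this[THEN h] have "\<bar>h (\<lambda>j\<in>{..<m}. x j) - h (\<lambda>j\<in>{..<m}. x (m + j))\<bar> \<le> 1"
    by auto
  then show ?thesis by (simp add: eta_def abs_square_le_1)
qed

locale bounded_kernel_sample = iid_sample +
  fixes m :: nat and h :: "(nat \<Rightarrow> 'b) \<Rightarrow> real"
  assumes h_measurable: "h \<in> borel_measurable (PiM {..<m} (\<lambda>_. borel))"
    and h_bounded: "\<And>x. x \<in> PiE {..<m} (\<lambda>_. A) \<Longrightarrow> h x \<in> {0..1}"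
    and h_symmetric: "symmetric_kernel A m h"
    and eta_symmetric: "symmetric_kernel A (2 * m) (eta m h)"
    and m_pos: "0 < m" and sample_size: "2 * m \<le> n"
begin

definition kernel_mean :: real where
  "kernel_mean = (\<integral>x. h x \<partial>PiM {..<m} (\<lambda>_. sample_law))"

definition kernel_variance :: real where
  "kernel_variance = (\<integral>x. (h x - kernel_mean)\<^sup>2 \<partial>PiM {..<m} (\<lambda>_. sample_law))"

lemma random_variable_kernel_sample:
  "f ` {..<m} \<subseteq> {..<n} \<Longrightarrow> random_variable borel (\<lambda>\<omega>. h (sample_tuple m f \<omega>))"
  using measurable_comp[OF measurable_sample_tuple h_measurable] by (simp add: o_def)

lemma kernel_sample_bounds:
  assumes "f ` {..<m} \<subseteq> {..<n}" "\<omega> \<in> space M"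
  shows "h (sample_tuple m f \<omega>) \<in> {0..1}"
  by (rule h_bounded[OF sample_tuple_in_PiE[OF assms]])

lemma integrable_kernel_sample:
  assumes "f ` {..<m} \<subseteq> {..<n}"
  shows "integrable M (\<lambda>\<omega>. h (sample_tuple m f \<omega>))"
  using kernel_sample_bounds[OF assms]
  by (intro integrable_of_abs_le[where B = 1] random_variable_kernel_sample[OF assms]) auto

lemma expectation_kernel_sample:
  assumes "inj_on f {..<m}" "f ` {..<m} \<subseteq> {..<n}"
  shows "expectation (\<lambda>\<omega>. h (sample_tuple m f \<omega>)) = kernel_mean"
  unfolding kernel_mean_def by (rule integral_sample_tuple[OF assms m_pos h_measurable])

lemma variance_kernel_sample:
  assumes "inj_on f {..<m}" "f ` {..<m} \<subseteq> {..<n}"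
  shows "variance (\<lambda>\<omega>. h (sample_tuple m f \<omega>)) = kernel_variance"
  unfolding kernel_variance_def expectation_kernel_sample[OF assms]
  by (intro integral_sample_tuple[OF assms m_pos] borel_measurable_power borel_measurable_diff
      h_measurable borel_measurable_const)

lemma kernel_mean_bounds: "0 \<le> kernel_mean \<and> kernel_mean \<le> 1"
proof -
  have id: "inj_on id {..<m}" "id ` {..<m} \<subseteq> {..<n}" using sample_size by auto
  have "0 \<le> expectation (\<lambda>\<omega>. h (sample_tuple m id \<omega>))"
    using kernel_sample_bounds[OF id(2)] by (intro integral_nonneg_AE) auto
  moreover have "expectation (\<lambda>\<omega>. h (sample_tuple m id \<omega>)) \<le> expectation (\<lambda>_. 1)"
    using kernel_sample_bounds[OF id(2)] integrable_kernel_sample[OF id(2)]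
    by (intro integral_mono) auto
  ultimately show ?thesis
    using expectation_kernel_sample[OF id] by (simp add: prob_space)
qed

lemma integral_kernel_centred: "(\<integral>x. h x - kernel_mean \<partial>PiM {..<m} (\<lambda>_. sample_law)) = 0"
proof -
  have id: "inj_on id {..<m}" "id ` {..<m} \<subseteq> {..<n}" using sample_size by auto
  have "(\<integral>x. h x - kernel_mean \<partial>PiM {..<m} (\<lambda>_. sample_law))
      = expectation (\<lambda>\<omega>. h (sample_tuple m id \<omega>) - kernel_mean)"
    using m_pos h_measurable by (intro integral_sample_tuple[OF id, symmetric]) auto
  also have "\<dots> = 0"
    using integrable_kernel_sample[OF id(2)] expectation_kernel_sample[OF id] by (simp add: prob_space)
  finally show ?thesis .
qed

lemma eta_sample_tuple:
  "eta m h (sample_tuple (2 * m) f \<omega>)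
     = (h (sample_tuple m f \<omega>) - h (sample_tuple m (\<lambda>j. f (m + j)) \<omega>))\<^sup>2 / 2"
proof -
  have "(\<lambda>j\<in>{..<m}. sample_tuple (2 * m) f \<omega> (s + j)) = sample_tuple m (\<lambda>j. f (s + j)) \<omega>"
    if "s \<le> m" for s
    using that unfolding sample_tuple_def by (intro restrict_ext) simp
  from this[of 0] this[of m] show ?thesis by (simp add: eta_def)
qed

lemma eta_sample_bounds:
  assumes "f ` {..<2 * m} \<subseteq> {..<n}" "\<omega> \<in> space M"
  shows "0 \<le> eta m h (sample_tuple (2 * m) f \<omega>) \<and> eta m h (sample_tuple (2 * m) f \<omega>) \<le> 1 / 2"
  by (rule eta_bounds[OF h_bounded sample_tuple_in_PiE[OF assms]])

lemma random_variable_eta_sample: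
  assumes "f ` {..<2 * m} \<subseteq> {..<n}"
  shows "random_variable borel (\<lambda>\<omega>. eta m h (sample_tuple (2 * m) f \<omega>))"
  using measurable_comp[OF measurable_sample_tuple[OF assms] borel_measurable_eta[OF h_measurable]]
  by (simp add: o_def)

lemma integrable_eta_sample:
  assumes "f ` {..<2 * m} \<subseteq> {..<n}"
  shows "integrable M (\<lambda>\<omega>. eta m h (sample_tuple (2 * m) f \<omega>))"
proof -
  have "\<bar>eta m h (sample_tuple (2 * m) f \<omega>)\<bar> \<le> 1" if "\<omega> \<in> space M" for \<omega>
    using eta_sample_bounds[OF assms that] by auto
  then show ?thesis by (intro integrable_of_abs_le[where B = 1] random_variable_eta_sample[OF assms])
qed

text \<open>The two halves of the tuple are independent with the same law, so
  \<open>E \<eta> = (Var h + Var h) / 2\<close>.\<close>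

lemma expectation_eta_sample:
  "expectation (\<lambda>\<omega>. eta m h (sample_tuple (2 * m) id \<omega>)) = kernel_variance"
proof -
  define shift where "shift = (\<lambda>j. m + j)"
  have halves: "inj_on id {..<m}" "id ` {..<m} \<subseteq> {..<n}"
      "inj_on shift {..<m}" "shift ` {..<m} \<subseteq> {..<n}"
    using sample_size by (auto simp: shift_def inj_on_def)
  have "disjoint_family (\<lambda>b. case_bool id shift b ` {..<m})"
    by (auto simp: disjoint_family_on_def shift_def split: bool.split)
  then have indep: "indep_vars (\<lambda>_. PiM {..<m} (\<lambda>_. borel)) (\<lambda>b. sample_tuple m (case_bool id shift b)) UNIV"
    using halves by (intro indep_sample_tuples) (auto split: bool.split)
  have eqs: "(\<lambda>b. sample_tuple m (case_bool id shift b)) = case_bool (sample_tuple m id) (sample_tuple m shift)"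
    "(\<lambda>_. PiM {..<m} (\<lambda>_. borel)) = case_bool (PiM {..<m} (\<lambda>_. borel)) (PiM {..<m} (\<lambda>_. borel))"
    by (auto simp: fun_eq_iff split: bool.split)
  have "indep_var (PiM {..<m} (\<lambda>_. borel)) (sample_tuple m id) (PiM {..<m} (\<lambda>_. borel)) (sample_tuple m shift)"
    using indep unfolding indep_var_def eqs .
  then have "indep_var borel (\<lambda>\<omega>. h (sample_tuple m id \<omega>)) borel (\<lambda>\<omega>. h (sample_tuple m shift \<omega>))"
    using indep_var_compose[OF _ h_measurable h_measurable] by (simp add: o_def)
  moreover have "variance (\<lambda>\<omega>. h (sample_tuple m id \<omega>)) = variance (\<lambda>\<omega>. h (sample_tuple m shift \<omega>))"
    unfolding variance_kernel_sample[OF halves(1,2)] variance_kernel_sample[OF halves(3,4)] ..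
  ultimately have "expectation (\<lambda>\<omega>. (h (sample_tuple m id \<omega>) - h (sample_tuple m shift \<omega>))\<^sup>2 / 2)
      = variance (\<lambda>\<omega>. h (sample_tuple m id \<omega>))"
    using kernel_sample_bounds halves expectation_kernel_sample[OF halves(1,2)]
      expectation_kernel_sample[OF halves(3,4)]
    by (intro expectation_half_square_diff_indep[where c = 1]) auto
  then show ?thesis
    unfolding variance_kernel_sample[OF halves(1,2)] shift_def by (simp add: eta_sample_tuple)
qed

lemma variance_eta_sample:
  "variance (\<lambda>\<omega>. eta m h (sample_tuple (2 * m) id \<omega>)) \<le> kernel_variance / 2"
proof -
  have "id ` {..<2 * m} \<subseteq> {..<n}" using sample_size by auto
  then have "variance (\<lambda>\<omega>. eta m h (sample_tuple (2 * m) id \<omega>))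
      \<le> 1 / 2 * expectation (\<lambda>\<omega>. eta m h (sample_tuple (2 * m) id \<omega>))"
    using eta_sample_bounds by (intro variance_le_bound_mult_expectation random_variable_eta_sample)
  then show ?thesis by (simp add: expectation_eta_sample)
qed

end

section \<open>The empirical Bernstein bound\<close>

lemma sqrt_le_sqrt_add_of_deficit:
  fixes V W r :: real
  assumes V: "0 \<le> V" and W: "0 \<le> W" and r: "0 \<le> r"
    and deficit: "V - W < sqrt V * r + 2 * r\<^sup>2 / 3"
  shows "sqrt V \<le> sqrt W + 5 * r / 3"
proof (rule ccontr)
  define \<sigma> w where "\<sigma> = sqrt V" and "w = sqrt W"
  have w: "0 \<le> w" "w\<^sup>2 = W" and \<sigma>: "\<sigma>\<^sup>2 = V" using V W by (simp_all add: \<sigma>_def w_def)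
  assume "\<not> sqrt V \<le> sqrt W + 5 * r / 3"
  then have c1: "w + 5 * r / 3 < \<sigma>" by (simp add: \<sigma>_def w_def)
  then have "(w + 5 * r / 3) * (w + 2 * r / 3) < \<sigma> * (\<sigma> - r)"
    using w r by (intro mult_strict_mono) auto
  moreover have "(w + 5 * r / 3) * (w + 2 * r / 3) = w\<^sup>2 + 7 * w * r / 3 + 10 * r\<^sup>2 / 9"
    "\<sigma> * (\<sigma> - r) = \<sigma>\<^sup>2 - \<sigma> * r"
    by (simp_all add: power2_eq_square algebra_simps)
  moreover have "\<sigma>\<^sup>2 - \<sigma> * r - 2 * r\<^sup>2 / 3 < w\<^sup>2"
    using deficit \<sigma> w(2) unfolding \<sigma>_def[symmetric] by linarith
  moreover have "0 \<le> w * r" "0 \<le> r\<^sup>2" using w r by simp_all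
  ultimately show False by linarith
qed

lemma abs_le_empirical_bernstein_bound:
  fixes V W L a b D :: real
  assumes V: "0 \<le> V" and W: "0 \<le> W" and L: "0 < L" and a: "0 < a" and b: "0 < b"
    and deficit: "V - W < sqrt (2 * (V / 2) * L / b) + 2 * L / (3 * b)"
    and D: "\<bar>D\<bar> \<le> sqrt (2 * V * L / a) + 2 * L / (3 * a)"
  shows "\<bar>D\<bar> \<le> sqrt (2 * W / a * L) + (sqrt 2 / 2 + sqrt 42 / 6) * sqrt (2 / (a * b)) * L + 4 / (3 * a) * L"
proof -
  define r q where "r = sqrt (L / b)" and "q = sqrt (2 * L / a)"
  have r: "0 \<le> r" "r\<^sup>2 = L / b" and q: "0 \<le> q" using L a b by (simp_all add: r_def q_def)
  have "sqrt (2 * (V / 2) * L / b) = sqrt V * r" by (simp add: r_def real_sqrt_mult[symmetric])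
  then have "sqrt V \<le> sqrt W + 5 * r / 3"
    using deficit r by (intro sqrt_le_sqrt_add_of_deficit[OF V W r(1)]) simp
  then have "sqrt V * q \<le> (sqrt W + 5 * r / 3) * q"
    by (rule mult_right_mono[OF _ q])
  also have "\<dots> = sqrt W * q + 5 / 3 * (r * q)"
    by (simp add: algebra_simps)
  finally have "sqrt V * q \<le> sqrt W * q + 5 / 3 * (r * q)" .
  moreover have "sqrt (2 * V * L / a) = sqrt V * q" "sqrt W * q = sqrt (2 * W / a * L)"
    by (simp_all add: q_def real_sqrt_mult[symmetric])
  moreover have "r * q = sqrt (2 / (a * b)) * L"
  proof -
    have "r * q = sqrt (L / b * (2 * L / a))" unfolding r_def q_def by (rule real_sqrt_mult[symmetric])
    also have "L / b * (2 * L / a) = 2 / (a * b) * L\<^sup>2" by (simp add: power2_eq_square field_simps)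
    also have "sqrt \<dots> = sqrt (2 / (a * b)) * L"
      using L by (simp only: real_sqrt_mult real_sqrt_abs abs_of_pos)
    finally show ?thesis .
  qed
  moreover have "5 / 3 \<le> sqrt 2 / 2 + sqrt 42 / 6"
  proof -
    have "1.4 \<le> sqrt 2" "6 \<le> sqrt 42" by (rule real_le_rsqrt, simp add: power2_eq_square)+
    then show ?thesis by simp
  qed
  then have "5 / 3 * (sqrt (2 / (a * b)) * L) \<le> (sqrt 2 / 2 + sqrt 42 / 6) * sqrt (2 / (a * b)) * L"
    using L a b by (simp add: mult_right_mono)
  moreover have "2 * L / (3 * a) \<le> 4 / (3 * a) * L" using L a by (simp add: field_simps)
  ultimately show ?thesis using D by linarith
qed

lemma empirical_bernstein_bound_divisible:
  fixes m n :: nat and W L :: real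
  assumes dvd: "(2 * m) dvd n" and m: "0 < m" and n: "0 < n"
  shows "sqrt (2 * W / real (n div m) * L)
           + (sqrt 2 / 2 + sqrt 42 / 6) * sqrt (2 / (real (n div m) * real (n div (2 * m)))) * L
           + 4 / (3 * real (n div m)) * L
       = sqrt (2 * real m * W / real n * L) + (4 + sqrt 2 * (3 + sqrt 21)) * real m / (3 * real n) * L"
proof -
  have a: "real (n div m) = real n / real m"
    using dvd_trans[OF dvd_triv_right dvd] by (simp add: real_of_nat_div)
  have b: "real (n div (2 * m)) = real n / (2 * real m)" using dvd by (simp add: real_of_nat_div)
  have "2 / (real (n div m) * real (n div (2 * m))) = (2 * real m / real n)\<^sup>2"
    unfolding a b using m n by (simp add: power2_eq_square field_simps)
  then have sqrt_ab: "sqrt (2 / (real (n div m) * real (n div (2 * m)))) = 2 * real m / real n"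
    by simp
  have sqrt_42: "sqrt 42 = sqrt 2 * sqrt 21" by (simp add: real_sqrt_mult[symmetric])
  show ?thesis
    unfolding sqrt_ab unfolding a sqrt_42 using m n by (simp add: field_simps)
qed

lemma (in prob_space) prob_ge_of_compl_union_subset:
  assumes "S \<in> events" "E\<^sub>1 \<in> events" "E\<^sub>2 \<in> events" "space M - (E\<^sub>1 \<union> E\<^sub>2) \<subseteq> S"
  shows "1 - prob E\<^sub>1 - prob E\<^sub>2 \<le> prob S"
proof -
  have "prob (E\<^sub>1 \<union> E\<^sub>2) \<le> prob E\<^sub>1 + prob E\<^sub>2"
    by (rule measure_subadditive) (use assms in auto)
  then have "1 - prob E\<^sub>1 - prob E\<^sub>2 \<le> 1 - prob (E\<^sub>1 \<union> E\<^sub>2)" by simp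
  also have "\<dots> = prob (space M - (E\<^sub>1 \<union> E\<^sub>2))"
    using assms(2,3) by (simp add: prob_compl)
  also have "\<dots> \<le> prob S"
    using assms(1,4) by (rule finite_measure_mono[rotated])
  finally show ?thesis .
qed

context bounded_kernel_sample
begin

lemma kernel_variance_bounds: "0 \<le> kernel_variance \<and> kernel_variance \<le> 1 / 2"
proof -
  have id: "id ` {..<2 * m} \<subseteq> {..<n}" using sample_size by auto
  note bounds = eta_sample_bounds[OF id]
  have "expectation (\<lambda>\<omega>. eta m h (sample_tuple (2 * m) id \<omega>)) \<le> expectation (\<lambda>_. 1 / 2)"
    using bounds integrable_eta_sample[OF id] by (intro integral_mono) auto
  moreover have "0 \<le> expectation (\<lambda>\<omega>. eta m h (sample_tuple (2 * m) id \<omega>))"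
    using bounds by (intro integral_nonneg_AE) auto
  ultimately show ?thesis by (simp add: expectation_eta_sample prob_space)
qed

lemma prob_ustat_deviation_ge:
  fixes s L :: real
  assumes s: "\<bar>s\<bar> = 1" and L: "0 < L"
  shows "prob {\<omega> \<in> space M. sqrt (2 * kernel_variance * L / real (n div m)) + 2 * L / (3 * real (n div m))
           \<le> s * (ustat n m h (\<lambda>i. X i \<omega>) - kernel_mean)} \<le> exp (- L)"
proof -
  define g where "g = (\<lambda>x. s * (h x - kernel_mean))"
  have sym: "symmetric_kernel A m g"
    using h_symmetric by (simp add: g_def symmetric_kernel_def)
  have meas: "g \<in> borel_measurable (PiM {..<m} (\<lambda>_. borel))"
    unfolding g_def using h_measurable by measurable
  have bnd: "\<bar>g x\<bar> \<le> 1" if "x \<in> PiE {..<m} (\<lambda>_. A)" for x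
    using h_bounded[OF that] kernel_mean_bounds s by (auto simp: g_def abs_mult)
  have mean: "(\<integral>x. g x \<partial>PiM {..<m} (\<lambda>_. sample_law)) = 0"
    by (simp add: g_def integral_kernel_centred)
  have "s\<^sup>2 = 1" using power2_abs[of s] s by simp
  then have "(g x)\<^sup>2 = (h x - kernel_mean)\<^sup>2" for x
    by (simp add: g_def power_mult_distrib)
  then have var: "(\<integral>x. (g x)\<^sup>2 \<partial>PiM {..<m} (\<lambda>_. sample_law)) \<le> kernel_variance"
    by (simp add: kernel_variance_def)
  have m_le: "m \<le> n" using sample_size by simp
  have "g = (\<lambda>x. s * h x + - s * kernel_mean)" by (simp add: g_def fun_eq_iff algebra_simps)
  then have "ustat n m g x = s * ustat n m h x + - s * kernel_mean" for x
    by (simp only: ustat_affine[OF m_le])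
  then have "ustat n m g x = s * (ustat n m h x - kernel_mean)" for x
    by (simp add: algebra_simps)
  then show ?thesis
    using prob_ustat_ge_bernstein[OF sym meas m_pos m_le bnd mean var L] by simp
qed
lemma prob_abs_ustat_deviation_ge:
  fixes L :: real
  assumes L: "0 < L"
  shows "prob {\<omega> \<in> space M. sqrt (2 * kernel_variance * L / real (n div m)) + 2 * L / (3 * real (n div m))
           \<le> \<bar>ustat n m h (\<lambda>i. X i \<omega>) - kernel_mean\<bar>} \<le> 2 * exp (- L)"
proof -
  define t where "t = sqrt (2 * kernel_variance * L / real (n div m)) + 2 * L / (3 * real (n div m))"
  define E where "E s = {\<omega> \<in> space M. t \<le> s * (ustat n m h (\<lambda>i. X i \<omega>) - kernel_mean)}" for s :: real
  have [measurable]: "(\<lambda>\<omega>. ustat n m h (\<lambda>i. X i \<omega>)) \<in> borel_measurable M"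
    by (rule borel_measurable_ustat[OF h_measurable])
  have "{\<omega> \<in> space M. t \<le> \<bar>ustat n m h (\<lambda>i. X i \<omega>) - kernel_mean\<bar>} = E 1 \<union> E (- 1)"
    by (auto simp: E_def abs_if)
  also have "prob \<dots> \<le> prob (E 1) + prob (E (- 1))"
    by (rule measure_subadditive) (auto simp: E_def)
  also have "\<dots> \<le> 2 * exp (- L)"
    using prob_ustat_deviation_ge[of 1 L] prob_ustat_deviation_ge[of "- 1" L] L
    by (simp add: E_def t_def)
  finally show ?thesis unfolding t_def .
qed

lemma prob_eta_ustat_deficit_ge:
  fixes L :: real
  assumes L: "0 < L"
  shows "prob {\<omega> \<in> space M. sqrt (2 * (kernel_variance / 2) * L / real (n div (2 * m)))
           + 2 * L / (3 * real (n div (2 * m)))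
           \<le> kernel_variance - ustat n (2 * m) (eta m h) (\<lambda>i. X i \<omega>)} \<le> exp (- L)"
proof -
  define g where "g = (\<lambda>x. kernel_variance - eta m h x)"
  have id: "inj_on id {..<2 * m}" "id ` {..<2 * m} \<subseteq> {..<n}" and k: "0 < 2 * m" "2 * m \<le> n"
    using m_pos sample_size by auto
  have sym: "symmetric_kernel A (2 * m) g"
    using eta_symmetric by (simp add: g_def symmetric_kernel_def)
  have meas: "g \<in> borel_measurable (PiM {..<2 * m} (\<lambda>_. borel))"
    unfolding g_def using borel_measurable_eta[OF h_measurable] by measurable
  have bnd: "\<bar>g x\<bar> \<le> 1" if "x \<in> PiE {..<2 * m} (\<lambda>_. A)" for x
    using eta_bounds[where h = h, OF h_bounded that] kernel_variance_bounds by (auto simp: g_def)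
  have integral_g: "(\<integral>x. f (g x) \<partial>PiM {..<2 * m} (\<lambda>_. sample_law))
      = expectation (\<lambda>\<omega>. f (kernel_variance - eta m h (sample_tuple (2 * m) id \<omega>)))"
    if "f \<in> borel_measurable borel" for f :: "real \<Rightarrow> real"
    using measurable_comp[OF meas that] unfolding g_def o_def
    by (rule integral_sample_tuple[OF id k(1), symmetric])
  have mean: "(\<integral>x. g x \<partial>PiM {..<2 * m} (\<lambda>_. sample_law)) = 0"
    using integral_g[of "\<lambda>y. y"] integrable_eta_sample[OF id(2)]
    by (simp add: expectation_eta_sample prob_space)
  have var: "(\<integral>x. (g x)\<^sup>2 \<partial>PiM {..<2 * m} (\<lambda>_. sample_law)) \<le> kernel_variance / 2"
    using integral_g[of "\<lambda>y. y\<^sup>2"] variance_eta_sample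
    by (simp add: expectation_eta_sample power2_commute)
  have "ustat n (2 * m) g x = kernel_variance - ustat n (2 * m) (eta m h) x" for x
    using ustat_affine[OF k(2), of "- 1" "eta m h" kernel_variance x] by (simp add: g_def)
  then show ?thesis
    using prob_ustat_ge_bernstein[OF sym meas k bnd mean var L] by simp
qed

theorem ustat_concentration:
  fixes \<delta> :: real
  assumes \<delta>: "0 < \<delta>" "\<delta> < 1"
  shows "1 - \<delta> \<le> prob {\<omega> \<in> space M. \<bar>ustat n m h (\<lambda>i. X i \<omega>) - kernel_mean\<bar> \<le>
           sqrt (2 * ustat n (2 * m) (eta m h) (\<lambda>i. X i \<omega>) / real (n div m) * ln (3 / \<delta>))
           + (sqrt 2 / 2 + sqrt 42 / 6) * sqrt (2 / (real (n div m) * real (n div (2 * m)))) * ln (3 / \<delta>)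
           + 4 / (3 * real (n div m)) * ln (3 / \<delta>)}"
    (is "_ \<le> prob ?S")
proof -
  define L a b where "L = ln (3 / \<delta>)" and "a = real (n div m)" and "b = real (n div (2 * m))"
  define U W where "U \<omega> = ustat n m h (\<lambda>i. X i \<omega>)" and "W \<omega> = ustat n (2 * m) (eta m h) (\<lambda>i. X i \<omega>)"
    for \<omega>
  define V where "V = kernel_variance"
  have L: "0 < L" and exp_L: "exp (- L) = \<delta> / 3" using \<delta> by (simp_all add: L_def exp_minus)
  have ab: "0 < a" "0 < b"
    using m_pos sample_size by (auto simp: a_def b_def div_greater_zero_iff)
  have [measurable]: "U \<in> borel_measurable M" "W \<in> borel_measurable M"
    unfolding U_def W_def using h_measurable borel_measurable_eta[OF h_measurable]
    by (auto intro: borel_measurable_ustat)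
  define E\<^sub>1 where "E\<^sub>1 = {\<omega> \<in> space M. sqrt (2 * V * L / a) + 2 * L / (3 * a) \<le> \<bar>U \<omega> - kernel_mean\<bar>}"
  define E\<^sub>2 where "E\<^sub>2 = {\<omega> \<in> space M. sqrt (2 * (V / 2) * L / b) + 2 * L / (3 * b) \<le> V - W \<omega>}"
  have "prob E\<^sub>1 \<le> 2 * (\<delta> / 3)" "prob E\<^sub>2 \<le> \<delta> / 3"
    using prob_abs_ustat_deviation_ge[OF L] prob_eta_ustat_deficit_ge[OF L]
    by (simp_all add: E\<^sub>1_def E\<^sub>2_def U_def W_def V_def a_def b_def exp_L)
  moreover have "space M - (E\<^sub>1 \<union> E\<^sub>2) \<subseteq> ?S"
  proof
    fix \<omega> assume "\<omega> \<in> space M - (E\<^sub>1 \<union> E\<^sub>2)"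
    then have \<omega>: "\<omega> \<in> space M" and "V - W \<omega> < sqrt (2 * (V / 2) * L / b) + 2 * L / (3 * b)"
      and "\<bar>U \<omega> - kernel_mean\<bar> \<le> sqrt (2 * V * L / a) + 2 * L / (3 * a)"
      by (auto simp: E\<^sub>1_def E\<^sub>2_def)
    moreover have "0 \<le> W \<omega>"
      unfolding W_def by (rule ustat_nonneg) (simp add: eta_def)
    ultimately have "\<bar>U \<omega> - kernel_mean\<bar> \<le> sqrt (2 * W \<omega> / a * L)
        + (sqrt 2 / 2 + sqrt 42 / 6) * sqrt (2 / (a * b)) * L + 4 / (3 * a) * L"
      using kernel_variance_bounds L ab by (intro abs_le_empirical_bernstein_bound) (auto simp: V_def)
    then show "\<omega> \<in> ?S"
      using \<omega> by (simp add: U_def W_def L_def a_def b_def)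
  qed
  moreover have "?S \<in> events" "E\<^sub>1 \<in> events" "E\<^sub>2 \<in> events"
  proof -
    have "(\<lambda>\<omega>. sqrt (2 * W \<omega> / a * L)) \<in> borel_measurable M"
      by (rule measurable_compose[OF _ borel_measurable_sqrt]) simp
    then show "?S \<in> events"
      unfolding U_def[symmetric] W_def[symmetric] L_def[symmetric] a_def[symmetric] b_def[symmetric]
      by (intro borel_measurable_le borel_measurable_add) simp_all
    show "E\<^sub>1 \<in> events" "E\<^sub>2 \<in> events"
      unfolding E\<^sub>1_def E\<^sub>2_def by (intro borel_measurable_le; simp)+
  qed
  ultimately show ?thesis
    using prob_ge_of_compl_union_subset[of ?S E\<^sub>1 E\<^sub>2] by linarith
qed

end

theorem mainTheorem8:
  fixes M :: "'a measure" and X :: "nat \<Rightarrow> 'a \<Rightarrow> real ^ 'd"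
    and XX :: "(real ^ 'd) set" and h :: "(nat \<Rightarrow> real ^ 'd) \<Rightarrow> real"
    and m n :: nat and \<delta> :: real
  assumes P: "prob_space M"
    and rv: "\<And>i. i < n \<Longrightarrow> X i \<in> borel_measurable M"
    and indep: "prob_space.indep_vars M (\<lambda>_. borel) X {..<n}"
    and ident: "\<And>i. i < n \<Longrightarrow> distr M borel (X i) = distr M borel (X 0)"
    and range: "\<And>i \<omega>. i < n \<Longrightarrow> \<omega> \<in> space M \<Longrightarrow> X i \<omega> \<in> XX"
    and hmeas: "h \<in> borel_measurable (PiM {..<m} (\<lambda>_. borel))"
    and hbound: "\<And>x. x \<in> PiE {..<m} (\<lambda>_. XX) \<Longrightarrow> h x \<in> {0..1}"
    and hsym: "symmetric_kernel XX m h"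
    and etasym: "symmetric_kernel XX (2 * m) (eta m h)"
    and m: "1 \<le> m" and n: "2 * m \<le> n"
    and d: "0 < \<delta>" "\<delta> < 1"
  shows
    "(let \<theta> = (\<integral>x. h x \<partial>(PiM {..<m} (\<lambda>_. distr M borel (X 0))));
          U = (\<lambda>\<omega>. ustat n m h (\<lambda>i. X i \<omega>));
          W = (\<lambda>\<omega>. ustat n (2 * m) (eta m h) (\<lambda>i. X i \<omega>));
          a = real (n div m); b = real (n div (2 * m)); L = ln (3 / \<delta>)
      in measure M {\<omega> \<in> space M. \<bar>U \<omega> - \<theta>\<bar> \<le>
             sqrt (2 * W \<omega> / a * L)
             + (sqrt 2 / 2 + sqrt 42 / 6) * sqrt (2 / (a * b)) * L
             + 4 / (3 * a) * L} \<ge> 1 - \<delta>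
       \<and> ((2 * m) dvd n \<longrightarrow>
           measure M {\<omega> \<in> space M. \<bar>U \<omega> - \<theta>\<bar> \<le>
             sqrt (2 * real m * W \<omega> / real n * L)
             + (4 + sqrt 2 * (3 + sqrt 21)) * real m / (3 * real n) * L} \<ge> 1 - \<delta>))"
proof -
  interpret bounded_kernel_sample M X n XX m h
    using m by (intro bounded_kernel_sample.intro bounded_kernel_sample_axioms.intro iid_sample.intro
        iid_sample_axioms.intro P rv indep ident range hmeas hbound hsym etasym n) simp_all
  have mean: "(\<integral>x. h x \<partial>PiM {..<m} (\<lambda>_. distr M borel (X 0))) = kernel_mean"
    by (simp add: kernel_mean_def sample_law_def)
  have "0 < m" "0 < n" using m n by simp_all
  note divisible = empirical_bernstein_bound_divisible[OF _ this]
  show ?thesis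
    unfolding Let_def mean
  proof (intro conjI impI)
    assume "(2 * m) dvd n"
    show "1 - \<delta> \<le> measure M {\<omega> \<in> space M. \<bar>ustat n m h (\<lambda>i. X i \<omega>) - kernel_mean\<bar> \<le>
        sqrt (2 * real m * ustat n (2 * m) (eta m h) (\<lambda>i. X i \<omega>) / real n * ln (3 / \<delta>))
        + (4 + sqrt 2 * (3 + sqrt 21)) * real m / (3 * real n) * ln (3 / \<delta>)}"
      using ustat_concentration[OF d] unfolding divisible[OF \<open>(2 * m) dvd n\<close>] .
  qed (rule ustat_concentration[OF d])
qed

end
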